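(* Let $k\ge 3$ be an integer and let $\varepsilon\in(0,1)$ satisfy $1/\varepsilon > k$. Then \[ d(k,\varepsilon) \ \le\ \frac{1}{2}\left(\frac{\log\big(r_k(\lfloor 1/\varepsilon+1\rfloor)+1\big)}{\log\big(\lfloor 1/\varepsilon+1\rfloor\big)}+1\right). \]
   Context: A $k$-term arithmetic progression ($k$AP) is a set $P=\{x, x+\lambda, \dots, x+(k-1)\lambda\}\subset\mathbb{R}$ with $\lambda>0$, called the gap length of $P$. For $N\in\mathbb{N}$, $r_k(N)$ denotes the maximal cardinality of a subset $A\subseteq\{1,\dots,N\}$ that contains no $k$AP. Given $\varepsilon\in(0,1)$, a set $E\subset\mathbb{R}$ is said to $\varepsilon$-avoid $k$APs if for every $k$AP $P$ with gap length $\lambda$ one has $\sup_{p\in P}\inf_{x\in E}|x-p|\ \ge\ \varepsilon\lambda$. Define $d(k,\varepsilon)=\sup\{\dim_H(E): E\subset\mathbb{R} \text{ bounded and } E \ \varepsilon\text{-avoids } k\text{APs}\}$, where $\dim_H$ is Hausdorff dimension. *)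

theory Defs
  imports "HOL-Analysis.Analysis"
begin

definition kAP :: "nat \<Rightarrow> real \<Rightarrow> real \<Rightarrow> real set" where
  "kAP k x lam = {x + real i * lam | i. i < k}"

definition contains_kAP :: "nat \<Rightarrow> nat set \<Rightarrow> bool" where
  "contains_kAP k A \<longleftrightarrow> (\<exists>x lam. lam > 0 \<and> kAP k x lam \<subseteq> real ` A)"

definition r_AP :: "nat \<Rightarrow> nat \<Rightarrow> nat" where
  "r_AP k N = Max {card A | A. A \<subseteq> {1..N} \<and> \<not> contains_kAP k A}"

(* E eps-avoids kAPs: for every kAP P with gap lam,
   sup_{p in P} inf_{x in E} |x - p| >= eps * lam.
   Since P is finite, this says some p in P has inf_{x in E} |x-p| >= eps*lam,
   i.e. |x - p| >= eps*lam for all x in E. *)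
definition eps_avoids :: "nat \<Rightarrow> real \<Rightarrow> real set \<Rightarrow> bool" where
  "eps_avoids k eps E \<longleftrightarrow>
     (\<forall>x lam. lam > 0 \<longrightarrow> (\<exists>p\<in>kAP k x lam. \<forall>y\<in>E. eps * lam \<le> \<bar>y - p\<bar>))"

definition hausdorff_content :: "real \<Rightarrow> real \<Rightarrow> real set \<Rightarrow> ennreal" where
  "hausdorff_content s delta E =
     (INF U \<in> {U :: nat \<Rightarrow> real set. E \<subseteq> (\<Union>i. U i) \<and>
                 (\<forall>i. bounded (U i) \<and> diameter (U i) \<le> delta)}.
        (\<Sum>i. ennreal (diameter (U i) powr s)))"

definition hausdorff_measure :: "real \<Rightarrow> real set \<Rightarrow> ennreal" where
  "hausdorff_measure s E = (SUP delta \<in> {0<..}. hausdorff_content s delta E)"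

(* Hausdorff dimension: inf { s > 0 : H^s(E) = 0 } (equals inf over s >= 0, since
   H^s(E) = 0 for all s > 1 and the s = 0 case only matters for E empty) *)
definition hausdorff_dim :: "real set \<Rightarrow> real" where
  "hausdorff_dim E = Inf {s. s > 0 \<and> hausdorff_measure s E = 0}"

definition d_AP :: "nat \<Rightarrow> real \<Rightarrow> real" where
  "d_AP k eps = Sup {hausdorff_dim E | E. bounded E \<and> eps_avoids k eps E}"

end

theory Submission
  imports Defs
begin

text \<open>
  Cut an interval containing \<open>E\<close> into \<open>N\<^sup>2\<close> equal cells and read the cell index \<open>qN + m\<close> in
  base \<open>N\<close>. For a fixed last digit \<open>m\<close>, the leading digits \<open>q\<close> of the cells meeting \<open>E\<close> form a
  \<open>k\<close>AP-free subset of \<open>{0..N-1}\<close>: a \<open>k\<close>AP among them yields a \<open>k\<close>AP of cell midpoints with gap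
  at least \<open>N\<close> cells, and since \<open>\<epsilon>N > 1\<close>, \<open>\<epsilon>\<close>-avoidance would push one of these midpoints
  further than a cell width away from \<open>E\<close>. Hence at most \<open>N r\<^sub>k(N)\<close> of the \<open>N\<^sup>2\<close> cells meet \<open>E\<close>.
  Avoidance is scale invariant, so iterating gives at most \<open>(N r\<^sub>k(N))\<^sup>n\<close> cells of length
  \<open>N\<^sup>-\<^sup>2\<^sup>n\<close>, and \<open>dim\<^sub>H E \<le> log (N r\<^sub>k(N)) / log N\<^sup>2\<close>.
\<close>

definition grid_cell :: "real \<Rightarrow> real \<Rightarrow> nat \<Rightarrow> real set" where
  "grid_cell a h t = {a + real t * h .. a + (real t + 1) * h}"

lemma diameter_grid_cell: "h > 0 \<Longrightarrow> diameter (grid_cell a h t) = h"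
  by (simp add: grid_cell_def algebra_simps)

lemma grid_cells_cover:
  assumes y: "y \<in> {a..a + real K * h}" and h: "h > 0" and K: "K > 0"
  shows "\<exists>j<K. y \<in> grid_cell a h j"
proof -
  define u where "u = (y - a) / h"
  have u0: "0 \<le> u" and uK: "u \<le> real K"
    using y h by (auto simp: u_def field_simps)
  have yu: "y = a + u * h" using h by (simp add: u_def)
  define j where "j = min (nat \<lfloor>u\<rfloor>) (K - 1)"
  have "real j \<le> u" "u \<le> real j + 1"
    using u0 uK K by (auto simp: j_def min_def of_nat_diff) linarith+
  moreover have "j < K" using K by (simp add: j_def)
  ultimately show ?thesis
    using h unfolding grid_cell_def yu by (auto intro!: exI[of _ j] mult_right_mono)
qed

lemma grid_cell_refine:
  assumes "t < M" and "h > 0"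
  shows "grid_cell a h (j * M + t) = grid_cell (a + real j * (real M * h)) h t"
    and "grid_cell a h (j * M + t) \<subseteq> grid_cell a (real M * h) j"
proof -
  show eq: "grid_cell a h (j * M + t) = grid_cell (a + real j * (real M * h)) h t"
    by (simp add: grid_cell_def algebra_simps)
  have "(real t + 1) * h \<le> real M * h"
    using assms by (intro mult_right_mono) auto
  then show "grid_cell a h (j * M + t) \<subseteq> grid_cell a (real M * h) j"
    using assms(2) unfolding eq by (auto simp: grid_cell_def algebra_simps)
qed

lemma card_grid_cells_le_power:
  assumes count: "\<And>a h. h > 0 \<Longrightarrow> card {t. t < M \<and> grid_cell a h t \<inter> E \<noteq> {}} \<le> b"
    and L: "L > 0" and M: "M > 0"
  shows "card {j. j < M ^ n \<and> grid_cell a (L / real M ^ n) j \<inter> E \<noteq> {}} \<le> b ^ n"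
proof (induction n)
  case 0
  have "{j. j < M ^ 0 \<and> grid_cell a (L / real M ^ 0) j \<inter> E \<noteq> {}} \<subseteq> {0}" by auto
  then show ?case using card_mono[of "{0::nat}"] by fastforce
next
  case (Suc n)
  define h where "h = L / real M ^ Suc n"
  have h: "h > 0" using L M by (simp add: h_def)
  have coarse: "real M * h = L / real M ^ n" using M by (simp add: h_def)
  let ?S = "\<lambda>n. {j. j < M ^ n \<and> grid_cell a (L / real M ^ n) j \<inter> E \<noteq> {}}"
  let ?T = "\<lambda>j. {t. t < M \<and> grid_cell (a + real j * (real M * h)) h t \<inter> E \<noteq> {}}"
  have refine: "?S (Suc n) \<subseteq> (\<lambda>(j, t). j * M + t) ` (SIGMA j:?S n. ?T j)"
  proof
    fix i assume i: "i \<in> ?S (Suc n)"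
    define j t where "j = i div M" and "t = i mod M"
    have t: "t < M" and i_eq: "i = j * M + t" using M by (auto simp: j_def t_def)
    have "j < M ^ n" using i M by (simp add: j_def less_mult_imp_div_less mult.commute)
    moreover have "grid_cell a h i \<inter> E \<noteq> {}" using i by (simp add: h_def)
    ultimately have "j \<in> ?S n" "t \<in> ?T j"
      using grid_cell_refine[OF t h, of a j] t unfolding i_eq coarse by auto
    then show "i \<in> (\<lambda>(j, t). j * M + t) ` (SIGMA j:?S n. ?T j)"
      using i_eq by force
  qed
  have "card (?S (Suc n)) \<le> card (SIGMA j:?S n. ?T j)"
    by (rule order_trans[OF card_mono[OF _ refine] card_image_le]) auto
  also have "\<dots> = (\<Sum>j\<in>?S n. card (?T j))" by simp
  also have "\<dots> \<le> card (?S n) * b"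
    using sum_mono[of "?S n" "\<lambda>j. card (?T j)" "\<lambda>_. b"] count h by simp
  also have "\<dots> \<le> b ^ Suc n" using Suc.IH by simp
  finally show ?case .
qed

lemma hausdorff_content_le_card_grid_cells:
  assumes E: "E \<subseteq> {a..a + real K * h}" and h: "0 < h" "h \<le> delta" and K: "K > 0"
  shows "hausdorff_content s delta E
           \<le> ennreal (real (card {j. j < K \<and> grid_cell a h j \<inter> E \<noteq> {}}) * h powr s)"
proof -
  define S where "S = {j. j < K \<and> grid_cell a h j \<inter> E \<noteq> {}}"
  define U where "U = (\<lambda>i. if i \<in> S then grid_cell a h i else {})"
  have "E \<subseteq> (\<Union>i. U i)"
  proof
    fix y assume "y \<in> E"
    with grid_cells_cover[of y a K h] E h K obtain j where "j < K" "y \<in> grid_cell a h j" by blast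
    with \<open>y \<in> E\<close> show "y \<in> (\<Union>i. U i)" by (auto simp: U_def S_def)
  qed
  moreover have "bounded (U i) \<and> diameter (U i) \<le> delta" for i
    using h diameter_grid_cell[of h a i] by (auto simp: U_def grid_cell_def)
  ultimately have "hausdorff_content s delta E \<le> (\<Sum>i. ennreal (diameter (U i) powr s))"
    unfolding hausdorff_content_def by (intro INF_lower) auto
  also have "\<dots> = (\<Sum>i\<in>S. ennreal (diameter (U i) powr s))"
    by (rule suminf_finite) (auto simp: U_def S_def)
  also have "\<dots> = (\<Sum>i\<in>S. ennreal (h powr s))"
    using h by (intro sum.cong) (simp_all add: U_def diameter_grid_cell)
  also have "\<dots> = ennreal (real (card S) * h powr s)"
    by (simp add: ennreal_mult ennreal_of_nat_eq_real_of_nat)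
  finally show ?thesis by (simp add: S_def)
qed

lemma hausdorff_content_eq_0_of_grid_counts:
  fixes M c :: nat
  assumes E: "E \<subseteq> {a..a + L}" and L: "L > 0" and M: "M > 1" and c: "c \<ge> 1"
    and count: "\<And>n. card {j. j < M ^ n \<and> grid_cell a (L / real M ^ n) j \<inter> E \<noteq> {}} \<le> c ^ n"
    and s: "s > ln c / ln M" and delta: "delta > 0"
  shows "hausdorff_content s delta E = 0"
proof -
  define q where "q = real c / real M powr s"
  have "real c = real M powr (ln c / ln M)" using M c by (simp add: powr_def)
  also have "\<dots> < real M powr s" using M s by (intro powr_less_mono) auto
  finally have q: "0 \<le> q" "q < 1" using M by (auto simp: q_def)
  have "hausdorff_content s delta E \<le> ennreal (L powr s * q ^ n)"
    if small: "L / real M ^ n \<le> delta" for n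
  proof -
    have "(L / real M ^ n) powr s = L powr s / (real M powr s) ^ n"
      using M L by (simp add: powr_divide powr_realpow[symmetric] powr_powr powr_power mult.commute)
    then have q_eq: "real (c ^ n) * (L / real M ^ n) powr s = L powr s * q ^ n"
      by (simp add: q_def power_divide)
    have "hausdorff_content s delta E
        \<le> ennreal (real (card {j. j < M ^ n \<and> grid_cell a (L / real M ^ n) j \<inter> E \<noteq> {}})
                    * (L / real M ^ n) powr s)"
      using E L M small by (intro hausdorff_content_le_card_grid_cells) auto
    also have "\<dots> \<le> ennreal (real (c ^ n) * (L / real M ^ n) powr s)"
      using count[of n] by (intro ennreal_leI mult_right_mono) simp_all
    finally show ?thesis unfolding q_eq .
  qed
  note bound = this
  have "(\<lambda>n. L * inverse (real M ^ n)) \<longlonglongrightarrow> 0"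
    using M by (intro tendsto_mult_right_zero LIMSEQ_inverse_realpow_zero) simp
  then have fine: "\<forall>\<^sub>F n in sequentially. L / real M ^ n < delta"
    using delta by (simp add: order_tendstoD(2) divide_inverse)
  have "(\<lambda>n. L powr s * q ^ n) \<longlonglongrightarrow> 0"
    using q by (intro tendsto_mult_right_zero LIMSEQ_power_zero) auto
  then have small: "\<forall>\<^sub>F n in sequentially. L powr s * q ^ n < e" if "e > 0" for e
    using that by (rule order_tendstoD(2))
  have "hausdorff_content s delta E \<le> 0"
  proof (rule ennreal_le_epsilon)
    fix e :: real assume "e > 0"
    from eventually_conj[OF fine small[OF this]] obtain n
      where n: "L / real M ^ n < delta" "L powr s * q ^ n < e"
      unfolding eventually_sequentially by blast
    have "hausdorff_content s delta E \<le> ennreal (L powr s * q ^ n)"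
      using bound n(1) by simp
    also have "\<dots> \<le> ennreal e" using n(2) by (intro ennreal_leI) simp
    finally show "hausdorff_content s delta E \<le> 0 + ennreal e" by simp
  qed
  then show ?thesis by simp
qed

lemma hausdorff_dim_le_of_grid_counts:
  fixes M c :: nat
  assumes E: "E \<subseteq> {a..a + L}" and L: "L > 0" and M: "M > 1" and c: "c \<ge> 1"
    and count: "\<And>n. card {j. j < M ^ n \<and> grid_cell a (L / real M ^ n) j \<inter> E \<noteq> {}} \<le> c ^ n"
  shows "hausdorff_dim E \<le> ln c / ln M"
proof -
  let ?A = "{s. s > 0 \<and> hausdorff_measure s E = 0}"
  have "s \<in> ?A" if s: "s > ln c / ln M" for s
  proof -
    have "ln c / ln M \<ge> 0" using M c by simp
    moreover have "hausdorff_measure s E = (SUP delta\<in>{0::real<..}. 0)"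
      unfolding hausdorff_measure_def
      using hausdorff_content_eq_0_of_grid_counts[OF E L M c count s] by (intro SUP_cong) auto
    ultimately show ?thesis using s by simp
  qed
  then have "Inf ?A \<le> ln c / ln M + e" if "e > 0" for e
    using that by (intro cInf_lower bdd_belowI[of _ 0]) auto
  then show ?thesis unfolding hausdorff_dim_def by (rule field_le_epsilon)
qed

lemma bounded_subset_interval:
  fixes E :: "real set"
  assumes "bounded E"
  obtains a L where "L > 0" "E \<subseteq> {a..a + L}"
proof -
  obtain B where "\<forall>x\<in>E. \<bar>x\<bar> \<le> B" using assms unfolding bounded_real by blast
  then have "E \<subseteq> {- (\<bar>B\<bar> + 1)..- (\<bar>B\<bar> + 1) + 2 * (\<bar>B\<bar> + 1)}" by (force simp: abs_le_iff)
  then show ?thesis by (rule that[rotated]) simp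
qed

lemma kAP_first_mem: "k > 0 \<Longrightarrow> x \<in> kAP k x lam"
  unfolding kAP_def by (auto intro!: exI[of _ 0])

lemma not_contains_kAP_singleton:
  assumes "k \<ge> 2"
  shows "\<not> contains_kAP k {n}"
proof
  assume "contains_kAP k {n}"
  then obtain x lam where "lam > 0" "kAP k x lam \<subseteq> {real n}"
    unfolding contains_kAP_def by auto
  moreover have "x \<in> kAP k x lam" using assms kAP_first_mem by simp
  moreover have "x + lam \<in> kAP k x lam"
    using assms unfolding kAP_def by (auto intro!: exI[of _ 1])
  ultimately have "x = real n" "x + lam = real n" by blast+
  with \<open>lam > 0\<close> show False by simp
qed

lemma eps_avoids_empty: "k > 0 \<Longrightarrow> eps_avoids k eps {}"
  unfolding eps_avoids_def using kAP_first_mem by blast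

lemma card_le_r_AP:
  assumes "A \<subseteq> {1..N}" and "\<not> contains_kAP k A"
  shows "card A \<le> r_AP k N"
proof -
  have "{card A | A. A \<subseteq> {1..N} \<and> \<not> contains_kAP k A} \<subseteq> card ` Pow {1..N}" by auto
  then show ?thesis
    unfolding r_AP_def using assms by (intro Max_ge) (auto intro: finite_subset)
qed

lemma r_AP_ge_1: "k \<ge> 2 \<Longrightarrow> N \<ge> 1 \<Longrightarrow> r_AP k N \<ge> 1"
  using card_le_r_AP[of "{1}" N k] not_contains_kAP_singleton by simp

lemma digit_class_kAP_free:
  assumes k: "k \<ge> 2" and avoid: "eps_avoids k eps E" and epsN: "eps * real N > 1" and h: "h > 0"
  shows "\<not> contains_kAP k (Suc ` {q. q < N \<and> grid_cell a h (q * N + m) \<inter> E \<noteq> {}})"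
    (is "\<not> contains_kAP k (Suc ` ?Q)")
proof
  assume "contains_kAP k (Suc ` ?Q)"
  then obtain x lam where lam: "lam > 0" and sub: "kAP k x lam \<subseteq> real ` Suc ` ?Q"
    unfolding contains_kAP_def by blast
  have digit: "\<exists>q\<in>?Q. x + real i * lam = real (Suc q)" if "i < k" for i
    using sub that unfolding kAP_def by blast
  obtain q0 where q0: "x = real (Suc q0)" using digit[of 0] k by auto
  obtain q1 where q1: "x + lam = real (Suc q1)" using digit[of 1] k by auto
  have "q1 \<ge> Suc q0" using q0 q1 lam by simp
  with q0 q1 have lam1: "lam \<ge> 1" by (simp add: of_nat_diff)
  have N: "real N > 0" using epsN by (cases "N = 0") auto
  \<comment> \<open>the midpoints of the cells \<open>(x + i\<lambda> - 1)N + m\<close> form a \<open>k\<close>AP with gap \<open>\<lambda>Nh\<close>\<close>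
  define x' where "x' = a + ((x - 1) * real N + real m + 1/2) * h"
  obtain p where p: "p \<in> kAP k x' (lam * real N * h)"
    and far: "\<forall>y\<in>E. eps * (lam * real N * h) \<le> \<bar>y - p\<bar>"
    using avoid lam N h unfolding eps_avoids_def by (meson mult_pos_pos)
  obtain i where i: "i < k" "p = x' + real i * (lam * real N * h)"
    using p unfolding kAP_def by blast
  obtain q where q: "q \<in> ?Q" "x + real i * lam = real (Suc q)" using digit[OF i(1)] by blast
  have "p = a + ((x + real i * lam - 1) * real N + real m + 1/2) * h"
    unfolding i(2) x'_def by (simp add: algebra_simps)
  then have p_mid: "p = a + (real (q * N + m) + 1/2) * h" using q(2) by simp
  obtain y where y: "y \<in> E" "y \<in> grid_cell a h (q * N + m)" using q(1) by blast
  then have "\<bar>y - p\<bar> \<le> h / 2" unfolding grid_cell_def p_mid by (auto simp: algebra_simps abs_if)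
  also have "\<dots> < (eps * real N) * h" using epsN h by simp
  also have "\<dots> \<le> (eps * real N * h) * lam"
    using mult_left_mono[OF lam1, of "eps * real N * h"] epsN h by simp
  also have "\<dots> \<le> \<bar>y - p\<bar>" using far y(1) by (simp add: algebra_simps)
  finally show False by simp
qed

lemma card_grid_cells_eps_avoiding_le:
  assumes k: "k \<ge> 2" and avoid: "eps_avoids k eps E" and epsN: "eps * real N > 1" and h: "h > 0"
  shows "card {t. t < N\<^sup>2 \<and> grid_cell a h t \<inter> E \<noteq> {}} \<le> N * r_AP k N"
proof -
  let ?Q = "\<lambda>m. {q. q < N \<and> grid_cell a h (q * N + m) \<inter> E \<noteq> {}}"
  have N: "N > 0" using epsN by (cases "N = 0") auto
  have card_Q: "card (?Q m) \<le> r_AP k N" for m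
  proof -
    have "card (Suc ` ?Q m) \<le> r_AP k N"
      using digit_class_kAP_free[OF k avoid epsN h] by (intro card_le_r_AP) auto
    then show ?thesis by (simp add: card_image)
  qed
  have "{t. t < N\<^sup>2 \<and> grid_cell a h t \<inter> E \<noteq> {}} \<subseteq> (\<Union>m<N. (\<lambda>q. q * N + m) ` ?Q m)"
  proof
    fix t assume t: "t \<in> {t. t < N\<^sup>2 \<and> grid_cell a h t \<inter> E \<noteq> {}}"
    have "t div N < N" using t N by (simp add: less_mult_imp_div_less power2_eq_square)
    then show "t \<in> (\<Union>m<N. (\<lambda>q. q * N + m) ` ?Q m)"
      using t N by (intro UN_I[of "t mod N"]) (auto intro!: image_eqI[of t _ "t div N"])
  qed
  then have "card {t. t < N\<^sup>2 \<and> grid_cell a h t \<inter> E \<noteq> {}} \<le> card (\<Union>m<N. (\<lambda>q. q * N + m) ` ?Q m)"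
    by (rule card_mono[rotated]) auto
  also have "\<dots> \<le> (\<Sum>m<N. card ((\<lambda>q. q * N + m) ` ?Q m))" by (rule card_UN_le) auto
  also have "\<dots> \<le> (\<Sum>m<N. r_AP k N)"
    by (intro sum_mono order_trans[OF card_image_le card_Q]) auto
  finally show ?thesis by simp
qed

lemma hausdorff_dim_eps_avoiding_le:
  assumes k: "k \<ge> 2" and epsN: "eps * real N > 1" and N: "N \<ge> 2"
    and "bounded E" and avoid: "eps_avoids k eps E"
  shows "hausdorff_dim E \<le> ln (real (N * r_AP k N)) / ln (real (N\<^sup>2))"
proof -
  obtain a L where L: "L > 0" and E: "E \<subseteq> {a..a + L}"
    using bounded_subset_interval[OF \<open>bounded E\<close>] .
  have "N\<^sup>2 > 1" using one_less_power[of N 2] N by simp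
  moreover have "N * r_AP k N \<ge> 1" using r_AP_ge_1[OF k] N by simp
  moreover have "card {j. j < (N\<^sup>2) ^ n \<and> grid_cell a (L / real (N\<^sup>2) ^ n) j \<inter> E \<noteq> {}}
      \<le> (N * r_AP k N) ^ n" for n
    using card_grid_cells_eps_avoiding_le[OF k avoid epsN] L N
    by (intro card_grid_cells_le_power) auto
  ultimately show ?thesis
    using hausdorff_dim_le_of_grid_counts[OF E L] by blast
qed

lemma d_AP_le:
  assumes "k > 0" and "\<And>E. bounded E \<Longrightarrow> eps_avoids k eps E \<Longrightarrow> hausdorff_dim E \<le> s"
  shows "d_AP k eps \<le> s"
  unfolding d_AP_def using assms eps_avoids_empty[of k eps]
  by (intro cSup_least) auto

theorem theorem1p1:
  fixes k :: nat and eps :: real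
  assumes "k \<ge> 3" and "0 < eps" and "eps < 1" and "1 / eps > real k"
  shows "d_AP k eps \<le>
    (1/2) * (ln (real (r_AP k (nat \<lfloor>1/eps + 1\<rfloor>)) + 1) / ln (real (nat \<lfloor>1/eps + 1\<rfloor>)) + 1)"
proof -
  define N where "N = nat \<lfloor>1/eps + 1\<rfloor>"
  define r where "r = r_AP k N"
  have "real N = real_of_int \<lfloor>1/eps\<rfloor> + 1"
    using assms by (simp add: N_def add.commute)
  then have "real N > 1 / eps" by linarith
  then have epsN: "eps * real N > 1"
    using \<open>0 < eps\<close> by (simp add: divide_less_eq mult.commute)
  have "real N > real k" using \<open>real N > 1 / eps\<close> assms(4) by linarith
  then have N: "N \<ge> 4" using assms(1) by simp
  have r: "r \<ge> 1" using r_AP_ge_1[of k N] assms N by (simp add: r_def)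
  have lnN: "ln (real N) > 0" using N by simp
  have "d_AP k eps \<le> ln (real (N * r)) / ln (real (N\<^sup>2))"
  proof (rule d_AP_le)
    fix E :: "real set" assume "bounded E" "eps_avoids k eps E"
    then show "hausdorff_dim E \<le> ln (real (N * r)) / ln (real (N\<^sup>2))"
      unfolding r_def using assms(1) N by (intro hausdorff_dim_eps_avoiding_le[OF _ epsN]) auto
  qed (use assms(1) in simp)
  also have "ln (real (N * r)) / ln (real (N\<^sup>2)) = (1/2) * (ln (real r) / ln (real N) + 1)"
    using N r lnN by (simp add: ln_mult ln_realpow field_simps)
  also have "\<dots> \<le> (1/2) * (ln (real r + 1) / ln (real N) + 1)"
    using r lnN by (intro mult_left_mono add_right_mono divide_right_mono) auto
  finally show ?thesis by (simp add: N_def r_def)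
qed

end
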